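(* Let $N=\langle V,\mathsf{cp},\mathsf{i},\mathsf{ci},\mathsf{cpt},\mathsf{cit}\rangle$ be a conditionally acyclic TCP-net with $V\neq\emptyset$. Then there is a variable $X\in V$ such that for every $Y\in V\setminus\{X\}$: $(Y,X)\notin\mathsf{cp}$, $(Y,X)\notin\mathsf{i}$, and $\{X,Y\}\notin\mathsf{ci}$.
   Context: Variables $V$ have finite nonempty domains $D(X)$; $D(U)$ denotes the set of assignments to $U\subseteq V$. A TCP-net is a tuple $N=\langle V,\mathsf{cp},\mathsf{i},\mathsf{ci},\mathsf{cpt},\mathsf{cit}\rangle$ where: $\mathsf{cp}$ is a set of directed cp-arcs $(X,Y)$ between distinct variables, with $Pa(X)=\{X' : (X',X)\in\mathsf{cp}\}$; $\mathsf{i}$ is a set of directed i-arcs $(X,Y)$ between distinct variables; $\mathsf{ci}$ is a set of undirected ci-arcs $\{X,Y\}$ between distinct variables, each with a nonempty selector set $S(X,Y)\subseteq V\setminus\{X,Y\}$; $\mathsf{cpt}$ assigns to each variable $X$ a table $CPT(X)$ mapping each assignment to $Pa(X)$ to a strict partial order on $D(X)$; $\mathsf{cit}$ assigns to each ci-arc $\gamma=\{X,Y\}$ a table $CIT(\gamma)$, a possibly partial map from $D(S(X,Y))$ to $\{X\rhd Y,\ Y\rhd X\}$. The dependency graph $N^\star$ has vertex set $V$, the cp-arcs and i-arcs as directed edges, the ci-arcs as undirected edges, and additionally, for every ci-arc $\{X_i,X_j\}$ and every $X_k\in S(X_i,X_j)$, the directed edges $(X_k,X_i)$ and $(X_k,X_j)$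 (if not already present). Let $S(N)$ be the union of all selector sets. For $w\in D(S(N))$, the $w$-directed graph of $N^\star$ consists of the vertices and directed edges of $N^\star$ together with, for every ci-arc $\{X_i,X_j\}$ whose CIT maps the restriction of $w$ to $S(X_i,X_j)$ to $X_i\rhd X_j$, a directed edge $(X_i,X_j)$ (if not already present). $N$ is conditionally acyclic iff for every $w\in D(S(N))$ the $w$-directed graph of $N^\star$ is acyclic. *)

theory Defs
  imports "HOL-Library.FuncSet"
begin

text \<open>An assignment to U is an extensional function in PiE U D.
 cp, i: directed arcs (pairs); ci: undirected arcs as two-element sets;
 S: selector set of a ci-arc; cpt X u: strict partial order on D X for u in D(Pa X);
 cit g w: None (undefined), or Some (X,Y) meaning X is more important than Y.\<close>

definition Pa :: "('v \<times> 'v) set \<Rightarrow> 'v \<Rightarrow> 'v set" where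
  "Pa cp X = {X'. (X', X) \<in> cp}"

definition strict_po_on :: "'d set \<Rightarrow> ('d \<times> 'd) set \<Rightarrow> bool" where
  "strict_po_on A r \<longleftrightarrow> r \<subseteq> A \<times> A \<and> irrefl r \<and> trans r"

definition tcp_net ::
  "'v set \<Rightarrow> ('v \<Rightarrow> 'd set) \<Rightarrow> ('v \<times> 'v) set \<Rightarrow> ('v \<times> 'v) set \<Rightarrow> 'v set set
   \<Rightarrow> ('v set \<Rightarrow> 'v set) \<Rightarrow> ('v \<Rightarrow> ('v \<Rightarrow> 'd) \<Rightarrow> ('d \<times> 'd) set)
   \<Rightarrow> ('v set \<Rightarrow> ('v \<Rightarrow> 'd) \<Rightarrow> ('v \<times> 'v) option) \<Rightarrow> bool" where
  "tcp_net V D cp i ci S cpt cit \<longleftrightarrow>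
     finite V \<and>
     (\<forall>X\<in>V. finite (D X) \<and> D X \<noteq> {}) \<and>
     (\<forall>(X,Y)\<in>cp. X \<in> V \<and> Y \<in> V \<and> X \<noteq> Y) \<and>
     (\<forall>(X,Y)\<in>i. X \<in> V \<and> Y \<in> V \<and> X \<noteq> Y) \<and>
     (\<forall>g\<in>ci. \<exists>X Y. g = {X, Y} \<and> X \<in> V \<and> Y \<in> V \<and> X \<noteq> Y) \<and>
     (\<forall>g\<in>ci. S g \<noteq> {} \<and> S g \<subseteq> V - g) \<and>
     (\<forall>X\<in>V. \<forall>u\<in>PiE (Pa cp X) D. strict_po_on (D X) (cpt X u)) \<and>
     (\<forall>g\<in>ci. \<forall>w\<in>PiE (S g) D.
        cit g w = None \<or> (\<exists>X Y. g = {X, Y} \<and> cit g w = Some (X, Y)))"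

definition S_N :: "'v set set \<Rightarrow> ('v set \<Rightarrow> 'v set) \<Rightarrow> 'v set" where
  "S_N ci S = (\<Union>g\<in>ci. S g)"

definition w_directed_edges ::
  "('v \<times> 'v) set \<Rightarrow> ('v \<times> 'v) set \<Rightarrow> 'v set set \<Rightarrow> ('v set \<Rightarrow> 'v set)
   \<Rightarrow> ('v set \<Rightarrow> ('v \<Rightarrow> 'd) \<Rightarrow> ('v \<times> 'v) option) \<Rightarrow> ('v \<Rightarrow> 'd) \<Rightarrow> ('v \<times> 'v) set" where
  "w_directed_edges cp i ci S cit w =
     cp \<union> i
     \<union> {(Xk, Xi). \<exists>g\<in>ci. Xi \<in> g \<and> Xk \<in> S g}
     \<union> {(Xi, Xj). {Xi, Xj} \<in> ci \<and> cit {Xi, Xj} (restrict w (S {Xi, Xj})) = Some (Xi, Xj)}"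

definition conditionally_acyclic ::
  "('v \<Rightarrow> 'd set) \<Rightarrow> ('v \<times> 'v) set \<Rightarrow> ('v \<times> 'v) set \<Rightarrow> 'v set set \<Rightarrow> ('v set \<Rightarrow> 'v set)
   \<Rightarrow> ('v set \<Rightarrow> ('v \<Rightarrow> 'd) \<Rightarrow> ('v \<times> 'v) option) \<Rightarrow> bool" where
  "conditionally_acyclic D cp i ci S cit \<longleftrightarrow>
     (\<forall>w\<in>PiE (S_N ci S) D. acyclic (w_directed_edges cp i ci S cit w))"

end

theory Submission
  imports Defs
begin

text \<open>Fix any assignment w to the selector variables (one exists since all domains are
  nonempty). The w-directed graph is acyclic, so its restriction to the finite set V has a
  source X. Such an X has no incoming cp- or i-arc, and it lies on no ci-arc either: a ci-arc
  at X has a nonempty selector set, and every selector variable Z contributes the arc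
  (Z, X) to the dependency graph.\<close>

lemma acyclic_finite_has_source:
  assumes "finite V" "V \<noteq> {}" "acyclic r"
  shows "\<exists>X\<in>V. \<forall>Y\<in>V. (Y, X) \<notin> r"
proof -
  have "wf (r \<inter> V \<times> V)"
    using assms(1,3) by (simp add: finite_acyclic_wf acyclic_subset finite_subset)
  then obtain X where "X \<in> V" and "\<And>Y. (Y, X) \<in> r \<inter> V \<times> V \<Longrightarrow> Y \<notin> V"
    using wfE_min assms(2) by (metis ex_in_conv)
  then show ?thesis
    by blast
qed

lemma tcp_net_selector_set:
  assumes "tcp_net V D cp i ci S cpt cit" "g \<in> ci"
  shows "S g \<noteq> {}" "S g \<subseteq> V - g"
  using assms unfolding tcp_net_def by simp_all

lemma tcp_net_selector_assignment_exists:
  assumes "tcp_net V D cp i ci S cpt cit"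
  obtains w where "w \<in> PiE (S_N ci S) D"
proof -
  have "S_N ci S \<subseteq> V"
    using tcp_net_selector_set[OF assms] unfolding S_N_def by blast
  moreover have "D X \<noteq> {}" if "X \<in> V" for X
    using assms that unfolding tcp_net_def by simp
  ultimately have "PiE (S_N ci S) D \<noteq> {}"
    by (auto simp: PiE_eq_empty_iff)
  then show thesis
    using that by blast
qed

lemma tcp_net_ci_arc_has_selector_edge:
  assumes "tcp_net V D cp i ci S cpt cit" "g \<in> ci" "X \<in> g"
  obtains Z where "Z \<in> V" "(Z, X) \<in> w_directed_edges cp i ci S cit w"
proof -
  obtain Z where "Z \<in> S g" "Z \<in> V"
    using tcp_net_selector_set[OF assms(1,2)] by blast
  then show thesis
    using that assms(2,3) unfolding w_directed_edges_def by blast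
qed

theorem lemma3:
  assumes "tcp_net V D cp i ci S cpt cit"
    and "conditionally_acyclic D cp i ci S cit"
    and "V \<noteq> {}"
  shows "\<exists>X\<in>V. \<forall>Y\<in>V - {X}. (Y, X) \<notin> cp \<and> (Y, X) \<notin> i \<and> {X, Y} \<notin> ci"
proof -
  obtain w where w: "w \<in> PiE (S_N ci S) D"
    using tcp_net_selector_assignment_exists[OF assms(1)] .
  define E where "E = w_directed_edges cp i ci S cit w"
  have "acyclic E"
    using assms(2) w unfolding conditionally_acyclic_def E_def by simp
  moreover have "finite V"
    using assms(1) unfolding tcp_net_def by simp
  ultimately obtain X where "X \<in> V" and source: "\<And>Y. Y \<in> V \<Longrightarrow> (Y, X) \<notin> E"
    using acyclic_finite_has_source assms(3) by metis
  have "{X, Y} \<notin> ci" for Y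
  proof
    assume "{X, Y} \<in> ci"
    then obtain Z where "Z \<in> V" "(Z, X) \<in> E"
      using tcp_net_ci_arc_has_selector_edge[OF assms(1)] unfolding E_def by blast
    with source show False
      by blast
  qed
  moreover have "(Y, X) \<notin> cp" "(Y, X) \<notin> i" if "Y \<in> V" for Y
    using source[OF that] unfolding E_def w_directed_edges_def by simp_all
  ultimately show ?thesis
    using \<open>X \<in> V\<close> by blast
qed

end
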